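(* Let $X=\{X(t):t\ge0\}$ be an $H$-self-similar process ($H>0$) with cadlag paths, let $0<T<\infty$, and assume the density $f(1,\cdot)$ of $X(1)$ is strictly positive. Let $X_1,X_2,\dots$ be i.i.d. copies of $X$ with cadlag paths on a complete probability space, and for $n\ge1$ let $\tau^n_\alpha(t)$ be the empirical quantile process built from $X_1,\dots,X_n$. Fix $\alpha^*\in(\frac12,1)$, let $A=[1-\alpha^*,\alpha^*]$, $A_{\mathbb Q}=A\cap\mathbb Q$, and $[0,T]_{\mathbb Q}=([0,T]\cap\mathbb Q)\cup\{T\}$. Then, for each $n\ge1$: with probability one, $t\mapsto\tau^n_\alpha(t)$ is right continuous on $[0,T)$ (for every $\alpha$); $$P\Big(\sup_{t\in[0,T],\alpha\in A}|\tau^n_\alpha(t)-\tau_\alpha(t)|=\sup_{t\in[0,T]_{\mathbb Q},\alpha\in A_{\mathbb Q}}|\tau^n_\alpha(t)-\tau_\alpha(t)|\Big)=1;$$ with probability one $\tau^n_\alpha(\cdot)$ has left limits at every $t\in(0,T]$; and if the paths of $X$ (and of the $X_j$) are continuous, then with probability one $\tau^n_\alpha(\cdot)$ is continuous on $[0,T]$. Moreover, for each $t\in[0,T]$ and $n\ge1$, with probability one $\alpha\mapsto\tau^n_\alpha(t)$ is left continuous and has right limits on $(0,1)$.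
   Context: $H$-self-similar: for all $c>0$, $\{X(ct)\}_{t\ge0}$ and $\{c^HX(t)\}_{t\ge0}$ have the same finite-dimensional distributions. Notation: $F(t,x)=P(X(t)\le x)$, $F_n(t,x)=\frac1n\sum_{i=1}^nI(X_i(t)\le x)$, $\tau_\alpha(t)=\inf\{x:F(t,x)\ge\alpha\}$, $\tau^n_\alpha(t)=\inf\{x:F_n(t,x)\ge\alpha\}$. *)

theory Defs
  imports "HOL-Probability.Probability"
begin

definition cadlag :: "(real \<Rightarrow> real) \<Rightarrow> bool" where
  "cadlag g \<longleftrightarrow> (\<forall>t\<ge>0. continuous (at_right t) g) \<and> (\<forall>t>0. \<exists>l. (g \<longlongrightarrow> l) (at_left t))"

definition self_similar :: "'a measure \<Rightarrow> real \<Rightarrow> (real \<Rightarrow> 'a \<Rightarrow> real) \<Rightarrow> bool" where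
  "self_similar N H X \<longleftrightarrow>
     (\<forall>c>0. \<forall>I. finite I \<and> I \<subseteq> {0..} \<longrightarrow>
        distr N (PiM I (\<lambda>_. borel)) (\<lambda>\<omega>. \<lambda>t\<in>I. X (c * t) \<omega>)
      = distr N (PiM I (\<lambda>_. borel)) (\<lambda>\<omega>. \<lambda>t\<in>I. c powr H * X t \<omega>))"

definition path_law :: "'a measure \<Rightarrow> (real \<Rightarrow> 'a \<Rightarrow> real) \<Rightarrow> (real \<Rightarrow> real) measure" where
  "path_law M X = distr M (PiM {0..} (\<lambda>_. borel)) (\<lambda>\<omega>. \<lambda>t\<in>{0..}. X t \<omega>)"

definition cdf :: "'a measure \<Rightarrow> (real \<Rightarrow> 'a \<Rightarrow> real) \<Rightarrow> real \<Rightarrow> real \<Rightarrow> real" where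
  "cdf N X t x = measure N {\<omega> \<in> space N. X t \<omega> \<le> x}"

definition quantile :: "'a measure \<Rightarrow> (real \<Rightarrow> 'a \<Rightarrow> real) \<Rightarrow> real \<Rightarrow> real \<Rightarrow> real" where
  "quantile N X \<alpha> t = Inf {x. \<alpha> \<le> cdf N X t x}"

definition emp_cdf :: "(nat \<Rightarrow> real \<Rightarrow> 'b \<Rightarrow> real) \<Rightarrow> nat \<Rightarrow> real \<Rightarrow> real \<Rightarrow> 'b \<Rightarrow> real" where
  "emp_cdf Xs n t x \<omega> = real (card {i \<in> {1..n}. Xs i t \<omega> \<le> x}) / real n"

definition emp_quantile :: "(nat \<Rightarrow> real \<Rightarrow> 'b \<Rightarrow> real) \<Rightarrow> nat \<Rightarrow> real \<Rightarrow> real \<Rightarrow> 'b \<Rightarrow> real" where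
  "emp_quantile Xs n \<alpha> t \<omega> = Inf {x. \<alpha> \<le> emp_cdf Xs n t x \<omega>}"

end

theory Submission
  imports Defs
begin

text \<open>Everything holds pathwise. The empirical distribution function takes values in
  multiples of \<open>1/n\<close>, so the empirical quantile depends on the level \<open>\<alpha>\<close> only through
  \<open>\<lceil>n\<alpha>\<rceil>\<close> (whence left continuity and right limits in \<open>\<alpha>\<close>), and it moves by at most
  \<open>\<epsilon>\<close> when every sample moves by at most \<open>\<epsilon>\<close>; so it inherits right continuity, left
  limits and continuity in \<open>t\<close> from the \<open>n\<close> sample paths. Self-similarity gives
  \<open>\<tau>\<^sub>\<alpha>(t) = t\<^sup>H \<tau>\<^sub>\<alpha>(1)\<close>, and a strictly positive density makes \<open>\<alpha> \<mapsto> \<tau>\<^sub>\<alpha>(1)\<close>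
  continuous. Hence a deviation \<open>|\<tau>\<^sup>n\<^sub>\<alpha>(t) - \<tau>\<^sub>\<alpha>(t)|\<close> is approximated first at a
  rational level with the same \<open>\<lceil>n\<alpha>\<rceil>\<close>, then, by right continuity in \<open>t\<close>, at a rational
  time or at \<open>T\<close>, which gives the equality of the two suprema.\<close>

section \<open>Generalized inverses\<close>

definition gen_inverse :: "(real \<Rightarrow> real) \<Rightarrow> real \<Rightarrow> real" where
  "gen_inverse F a = Inf {x. a \<le> F x}"

lemma gen_inverse_set:
  fixes F :: "real \<Rightarrow> real"
  assumes "mono F" "a \<le> F x1" "F x0 < a"
  shows "{x. a \<le> F x} \<noteq> {}" "bdd_below {x. a \<le> F x}"
proof -
  show "{x. a \<le> F x} \<noteq> {}" using assms(2) by blast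
  have "x0 \<le> x" if "a \<le> F x" for x
  proof (rule ccontr)
    assume "\<not> x0 \<le> x"
    then have "F x \<le> F x0" by (intro monoD[OF assms(1)]) simp
    then show False using assms(3) that by simp
  qed
  then show "bdd_below {x. a \<le> F x}" by (auto simp: bdd_below_def)
qed

lemma gen_inverse_set_of_limits:
  fixes F :: "real \<Rightarrow> real"
  assumes "mono F" "(F \<longlongrightarrow> 1) at_top" "(F \<longlongrightarrow> 0) at_bot" "0 < a" "a < 1"
  shows "{x. a \<le> F x} \<noteq> {}" "bdd_below {x. a \<le> F x}"
proof -
  have "eventually (\<lambda>x. a < F x) at_top" using order_tendstoD(1)[OF assms(2)] assms(5) by blast
  then obtain x1 where x1: "a \<le> F x1" unfolding eventually_at_top_linorder by (meson less_imp_le order_refl)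
  have "eventually (\<lambda>x. F x < a) at_bot" using order_tendstoD(2)[OF assms(3)] assms(4) by blast
  then obtain x0 where x0: "F x0 < a" unfolding eventually_at_bot_linorder by blast
  show "{x. a \<le> F x} \<noteq> {}" "bdd_below {x. a \<le> F x}"
    using gen_inverse_set[OF assms(1) x1 x0] by blast+
qed

lemma gen_inverse_le_shift:
  fixes F G :: "real \<Rightarrow> real"
  assumes shift: "\<And>x. G x \<le> F (x + e)"
    and "{x. a \<le> G x} \<noteq> {}" "bdd_below {x. a \<le> F x}"
  shows "gen_inverse F a \<le> gen_inverse G a + e"
proof -
  have "gen_inverse F a - e \<le> gen_inverse G a"
    unfolding gen_inverse_def
  proof (rule cInf_greatest[OF assms(2)])
    fix x assume "x \<in> {x. a \<le> G x}"
    then have "x + e \<in> {x. a \<le> F x}" using shift[of x] by simp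
    then show "Inf {x. a \<le> F x} - e \<le> x" using cInf_lower[OF _ assms(3)] by fastforce
  qed
  then show ?thesis by simp
qed

lemma gen_inverse_scale:
  fixes F :: "real \<Rightarrow> real"
  assumes "0 < p" "{x. a \<le> F x} \<noteq> {}" "bdd_below {x. a \<le> F x}"
  shows "gen_inverse (\<lambda>x. F (x / p)) a = p * gen_inverse F a"
proof -
  have "{x. a \<le> F (x / p)} = (\<lambda>x. p * x) ` {x. a \<le> F x}"
  proof (intro set_eqI iffI)
    fix x assume "x \<in> {x. a \<le> F (x / p)}"
    then show "x \<in> (\<lambda>x. p * x) ` {x. a \<le> F x}"
      using assms(1) by (intro image_eqI[of _ _ "x / p"]) auto
  qed (use assms(1) in auto)
  moreover have "p * Inf {x. a \<le> F x} = Inf ((\<lambda>x. p * x) ` {x. a \<le> F x})"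
    using assms by (intro continuous_at_Inf_mono monoI continuous_intros) auto
  ultimately show ?thesis
    unfolding gen_inverse_def by simp
qed

lemma isCont_gen_inverse:
  fixes F :: "real \<Rightarrow> real"
  assumes "strict_mono F" "(F \<longlongrightarrow> 1) at_top" "(F \<longlongrightarrow> 0) at_bot" "0 < a0" "a0 < 1"
  shows "isCont (gen_inverse F) a0"
  unfolding continuous_at_eps_delta
proof (intro allI impI)
  fix e :: real assume e: "0 < e"
  define q where "q = gen_inverse F a0"
  have "mono F" using strict_mono_mono[OF assms(1)] .
  note set = gen_inverse_set_of_limits[OF \<open>mono F\<close> assms(2-5)]
  have below: "F (q - e/2) < a0"
  proof (rule ccontr)
    assume "\<not> F (q - e/2) < a0"
    then have "q \<le> q - e/2" unfolding q_def gen_inverse_def by (intro cInf_lower set(2)) auto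
    then show False using e by simp
  qed
  obtain x where x: "a0 \<le> F x" "x < q + e/2"
    using cInf_less_iff[OF set, of "q + e/2"] e unfolding q_def gen_inverse_def by auto
  have above: "a0 < F (q + e/2)"
    using strict_monoD[OF assms(1), of x "q + e/2"] x by simp
  define d where "d = min (a0 - F (q - e/2)) (F (q + e/2) - a0)"
  show "\<exists>d>0. \<forall>a. dist a a0 < d \<longrightarrow> dist (gen_inverse F a) (gen_inverse F a0) < e"
  proof (intro exI[of _ d] conjI allI impI)
    show "0 < d" using below above by (simp add: d_def)
    fix a assume "dist a a0 < d"
    then have lo: "F (q - e/2) < a" and hi: "a < F (q + e/2)" by (auto simp: d_def dist_real_def)
    note set_a = gen_inverse_set[OF \<open>mono F\<close>, of a, OF less_imp_le[OF hi] lo]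
    have "gen_inverse F a \<le> q + e/2"
      unfolding gen_inverse_def using hi by (intro cInf_lower set_a(2)) auto
    moreover have "q - e/2 \<le> gen_inverse F a"
      unfolding gen_inverse_def
    proof (rule cInf_greatest[OF set_a(1)])
      fix y assume y: "y \<in> {x. a \<le> F x}"
      show "q - e/2 \<le> y"
      proof (rule ccontr)
        assume "\<not> q - e/2 \<le> y"
        then have "F y \<le> F (q - e/2)" using monoD[OF \<open>mono F\<close>] by simp
        then show False using y lo by simp
      qed
    qed
    ultimately show "dist (gen_inverse F a) (gen_inverse F a0) < e"
      using e unfolding q_def[symmetric] dist_real_def by linarith
  qed
qed

lemma gen_inverse_eq_0:
  fixes F :: "real \<Rightarrow> real"
  assumes "(F \<longlongrightarrow> 1) at_top" "(F \<longlongrightarrow> 0) at_bot"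
    and sign_invariant: "\<And>x y. 0 < x * y \<Longrightarrow> F x = F y" and "0 < a" "a < 1"
  shows "gen_inverse F a = 0"
proof -
  have pos: "F x = 1" if "0 < x" for x
  proof -
    have "eventually (\<lambda>y. F y = F x) at_top"
      using eventually_gt_at_top[of 0] by eventually_elim (use that sign_invariant in simp)
    then show ?thesis using tendsto_unique[OF _ tendsto_eventually assms(1)] by simp
  qed
  have neg: "F x = 0" if "x < 0" for x
  proof -
    have "eventually (\<lambda>y. F y = F x) at_bot"
      using eventually_gt_at_bot[of 0] by eventually_elim (use that in \<open>simp add: sign_invariant mult_neg_neg\<close>)
    then show ?thesis using tendsto_unique[OF _ tendsto_eventually assms(2)] by simp
  qed
  show ?thesis
    unfolding gen_inverse_def
  proof (rule cInf_eq_non_empty)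
    have "1 \<in> {x. a \<le> F x}" using pos[of 1] assms(5) by simp
    then show "{x. a \<le> F x} \<noteq> {}" by blast
    show "0 \<le> x" if "x \<in> {x. a \<le> F x}" for x
      using that neg[of x] assms(4) by force
    show "z \<le> 0" if lower: "\<And>x. x \<in> {x. a \<le> F x} \<Longrightarrow> z \<le> x" for z
      using lower[of "z / 2"] pos[of "z / 2"] assms(5) by force
  qed
qed

section \<open>Distribution functions of a self-similar process\<close>

lemma cdf_eq_distribution_cdf:
  assumes "X t \<in> borel_measurable N"
  shows "Defs.cdf N X t = Distribution_Functions.cdf (distr N borel (X t))"
proof
  fix x
  show "Defs.cdf N X t x = Distribution_Functions.cdf (distr N borel (X t)) x"
    unfolding Defs.cdf_def cdf_def2 measure_distr[OF assms, of "{..x}", simplified]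
    by (rule arg_cong[where f="measure N"]) auto
qed

lemma
  assumes "prob_space N" "X t \<in> borel_measurable N"
  shows mono_cdf: "mono (Defs.cdf N X t)"
    and cdf_at_top: "(Defs.cdf N X t \<longlongrightarrow> 1) at_top"
    and cdf_at_bot: "(Defs.cdf N X t \<longlongrightarrow> 0) at_bot"
proof -
  interpret real_distribution "distr N borel (X t)"
    using assms by (simp add: prob_space.real_distribution_distr)
  show "mono (Defs.cdf N X t)"
    unfolding cdf_eq_distribution_cdf[where X=X and t=t, OF assms(2)] by (intro monoI cdf_nondecreasing)
  show "(Defs.cdf N X t \<longlongrightarrow> 1) at_top"
    unfolding cdf_eq_distribution_cdf[where X=X and t=t, OF assms(2)] by (rule cdf_lim_at_top_prob)
  show "(Defs.cdf N X t \<longlongrightarrow> 0) at_bot"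
    unfolding cdf_eq_distribution_cdf[where X=X and t=t, OF assms(2)] by (rule cdf_lim_at_bot)
qed

lemma cdf_gen_inverse_set:
  assumes "prob_space N" "X t \<in> borel_measurable N" "0 < a" "a < 1"
  shows "{x. a \<le> Defs.cdf N X t x} \<noteq> {}" "bdd_below {x. a \<le> Defs.cdf N X t x}"
  using gen_inverse_set_of_limits[OF mono_cdf[where X=X and t=t, OF assms(1,2)]
      cdf_at_top[where X=X and t=t, OF assms(1,2)] cdf_at_bot[where X=X and t=t, OF assms(1,2)]
      assms(3,4)] .

lemma strict_mono_cdf_of_density:
  assumes "prob_space N" and density: "distributed N lborel (X t) f" and f_pos: "\<And>x. 0 < f x"
  shows "strict_mono (Defs.cdf N X t)"
proof (rule strict_monoI)
  fix x y :: real assume "x < y"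
  interpret prob_space N by (rule assms(1))
  let ?I = "{\<omega> \<in> space N. x < X t \<omega> \<and> X t \<omega> \<le> y}"
  have f_meas: "f \<in> borel_measurable lborel" and [measurable]: "X t \<in> borel_measurable N"
    using density by (simp_all add: distributed_def)
  have "{z. f z * indicator {x<..y} z \<noteq> 0} = {x<..y}"
    using f_pos by (auto simp: indicator_def less_le)
  then have "(\<integral>\<^sup>+z\<in>{x<..y}. f z \<partial>lborel) \<noteq> 0"
    using \<open>x < y\<close> f_meas by (subst nn_integral_0_iff) auto
  moreover have "emeasure N ?I = (\<integral>\<^sup>+z\<in>{x<..y}. f z \<partial>lborel)"
    using distributed_emeasure[OF density, of "{x<..y}"]
    by (simp add: Int_def conj_commute vimage_def)
  ultimately have "measure N ?I \<noteq> 0"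
    by (metis emeasure_eq_measure ennreal_0)
  then have "0 < measure N ?I" using measure_nonneg[of N ?I] by linarith
  moreover have "{\<omega> \<in> space N. X t \<omega> \<le> y} = {\<omega> \<in> space N. X t \<omega> \<le> x} \<union> ?I"
    using \<open>x < y\<close> by auto
  then have "Defs.cdf N X t y = Defs.cdf N X t x + measure N ?I"
    unfolding Defs.cdf_def by (simp add: finite_measure_Union disjoint_iff not_le)
  ultimately show "Defs.cdf N X t x < Defs.cdf N X t y" by simp
qed

lemma cdf_self_similar:
  assumes X_meas: "\<forall>t\<ge>0. X t \<in> borel_measurable N"
    and X_ss: "self_similar N H X" and c: "0 < c" and s: "0 \<le> s"
  shows "Defs.cdf N X (c * s) x = Defs.cdf N X s (x / c powr H)"
proof -
  let ?P = "PiM {s} (\<lambda>_. borel :: real measure)"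
  let ?B = "{g \<in> space ?P. g s \<le> x}"
  have law: "distr N ?P (\<lambda>\<omega>. \<lambda>u\<in>{s}. X (c * u) \<omega>) = distr N ?P (\<lambda>\<omega>. \<lambda>u\<in>{s}. c powr H * X u \<omega>)"
    using X_ss c s unfolding self_similar_def by auto
  have "(\<lambda>g. g s) \<in> borel_measurable ?P" by (rule measurable_component_singleton) simp
  then have B: "?B \<in> sets ?P" by measurable
  have m1: "(\<lambda>\<omega>. \<lambda>u\<in>{s}. X (c * u) \<omega>) \<in> measurable N ?P"
    using X_meas c s by (intro measurable_restrict) simp
  have m2: "(\<lambda>\<omega>. \<lambda>u\<in>{s}. c powr H * X u \<omega>) \<in> measurable N ?P"
    using X_meas s by (intro measurable_restrict borel_measurable_times measurable_const) simp_all
  have "Defs.cdf N X (c * s) x = measure (distr N ?P (\<lambda>\<omega>. \<lambda>u\<in>{s}. X (c * u) \<omega>)) ?B"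
    unfolding Defs.cdf_def measure_distr[OF m1 B]
    by (rule arg_cong[where f="measure N"]) (auto simp: space_PiM)
  also have "\<dots> = measure (distr N ?P (\<lambda>\<omega>. \<lambda>u\<in>{s}. c powr H * X u \<omega>)) ?B"
    by (simp only: law)
  also have "\<dots> = measure N {\<omega> \<in> space N. c powr H * X s \<omega> \<le> x}"
    unfolding measure_distr[OF m2 B]
    by (rule arg_cong[where f="measure N"]) (auto simp: space_PiM)
  also have "\<dots> = Defs.cdf N X s (x / c powr H)"
    unfolding Defs.cdf_def using c by (simp add: pos_le_divide_eq mult.commute)
  finally show ?thesis .
qed

context
  fixes N :: "'a measure" and X :: "real \<Rightarrow> 'a \<Rightarrow> real" and H :: real
  assumes N_prob: "prob_space N" and H_pos: "0 < H" and X_meas: "\<forall>t\<ge>0. X t \<in> borel_measurable N"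
    and X_ss: "self_similar N H X"
begin

lemma quantile_time_zero:
  assumes "0 < a" "a < 1"
  shows "quantile N X a 0 = 0"
proof -
  have sign_invariant: "Defs.cdf N X 0 x = Defs.cdf N X 0 y" if "0 < x * y" for x y
  proof -
    have "x \<noteq> 0" "y \<noteq> 0" "0 < x / y"
      using that by (auto simp: zero_less_divide_iff zero_less_mult_iff)
    define c where "c = (x / y) powr (1 / H)"
    have "0 < c" using \<open>x \<noteq> 0\<close> \<open>y \<noteq> 0\<close> by (simp add: c_def)
    have "c powr H = x / y"
      using \<open>0 < x / y\<close> H_pos by (simp add: c_def powr_powr) (metis abs_divide abs_of_pos)
    then have "x / c powr H = y" using \<open>x \<noteq> 0\<close> \<open>y \<noteq> 0\<close> by simp
    then show ?thesis using cdf_self_similar[OF X_meas X_ss \<open>0 < c\<close> order_refl, of x] by simp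
  qed
  have "X 0 \<in> borel_measurable N" using X_meas by simp
  then show ?thesis
    unfolding quantile_def gen_inverse_def[symmetric]
    using gen_inverse_eq_0[OF cdf_at_top cdf_at_bot sign_invariant assms] N_prob by blast
qed

lemma quantile_self_similar:
  assumes "0 \<le> t" "0 < a" "a < 1"
  shows "quantile N X a t = t powr H * quantile N X a 1"
proof (cases "t = 0")
  case True
  then show ?thesis using quantile_time_zero[OF assms(2,3)] by simp
next
  case False
  then have "0 < t powr H" using assms(1) by simp
  have "X 1 \<in> borel_measurable N" using X_meas by simp
  note set = cdf_gen_inverse_set[where X=X and t=1, OF N_prob this assms(2,3)]
  have "Defs.cdf N X t = (\<lambda>x. Defs.cdf N X 1 (x / t powr H))"
    using cdf_self_similar[OF X_meas X_ss, of t 1] assms(1) False by auto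
  then show ?thesis
    unfolding quantile_def gen_inverse_def[symmetric]
    using gen_inverse_scale[OF \<open>0 < t powr H\<close> set] by simp
qed

end

lemma isCont_quantile:
  assumes "prob_space N" "distributed N lborel (X t) f" "\<And>x. 0 < f x" "0 < a" "a < 1"
  shows "isCont (\<lambda>a. quantile N X a t) a"
proof -
  have "X t \<in> borel_measurable N" using assms(2) by (simp add: distributed_def)
  then show ?thesis
    unfolding quantile_def gen_inverse_def[symmetric]
    using isCont_gen_inverse[OF strict_mono_cdf_of_density cdf_at_top cdf_at_bot] assms
    by blast
qed

section \<open>Empirical quantiles\<close>

definition sample_cdf :: "nat \<Rightarrow> (nat \<Rightarrow> real) \<Rightarrow> real \<Rightarrow> real" where
  "sample_cdf n v x = real (card {i \<in> {1..n}. v i \<le> x}) / real n"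

lemma emp_quantile_eq_gen_inverse:
  "emp_quantile Xs n a t \<omega> = gen_inverse (sample_cdf n (\<lambda>i. Xs i t \<omega>)) a"
  by (simp add: emp_quantile_def emp_cdf_def sample_cdf_def gen_inverse_def)

lemma mono_sample_cdf: "mono (sample_cdf n v)"
  unfolding sample_cdf_def
  by (intro monoI divide_right_mono of_nat_mono card_mono) auto

lemma sample_cdf_shift:
  assumes "\<forall>i\<in>{1..n}. \<bar>v i - w i\<bar> \<le> e"
  shows "sample_cdf n w x \<le> sample_cdf n v (x + e)"
  unfolding sample_cdf_def
  by (intro divide_right_mono of_nat_mono card_mono) (use assms in force)+

lemma sample_cdf_gen_inverse_set:
  assumes "1 \<le> n" "0 < a" "a \<le> 1"
  shows "{x. a \<le> sample_cdf n v x} \<noteq> {}" "bdd_below {x. a \<le> sample_cdf n v x}"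
proof -
  have "{i \<in> {1..n}. v i \<le> Max (v ` {1..n})} = {1..n}" by auto
  then have top: "a \<le> sample_cdf n v (Max (v ` {1..n}))"
    using assms by (simp add: sample_cdf_def)
  have Min_le_v: "Min (v ` {1..n}) \<le> v i" if "i \<in> {1..n}" for i
    using that by simp
  have "{i \<in> {1..n}. v i \<le> Min (v ` {1..n}) - 1} = {}"
  proof (rule equals0I)
    fix i assume "i \<in> {i \<in> {1..n}. v i \<le> Min (v ` {1..n}) - 1}"
    then have "i \<in> {1..n}" "v i \<le> Min (v ` {1..n}) - 1" by auto
    then show False using Min_le_v[of i] by linarith
  qed
  then have bot: "sample_cdf n v (Min (v ` {1..n}) - 1) < a"
    unfolding sample_cdf_def using assms(2) by (subst \<open>_ = {}\<close>) simp
  show "{x. a \<le> sample_cdf n v x} \<noteq> {}" "bdd_below {x. a \<le> sample_cdf n v x}"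
    using gen_inverse_set[OF mono_sample_cdf top bot] by blast+
qed

lemma abs_gen_inverse_sample_cdf_diff_le:
  assumes "1 \<le> n" "0 < a" "a \<le> 1" "\<forall>i\<in>{1..n}. \<bar>v i - w i\<bar> \<le> e"
  shows "\<bar>gen_inverse (sample_cdf n v) a - gen_inverse (sample_cdf n w) a\<bar> \<le> e"
proof -
  have le: "gen_inverse (sample_cdf n v) a \<le> gen_inverse (sample_cdf n w) a + e"
    if "\<forall>i\<in>{1..n}. \<bar>v i - w i\<bar> \<le> e" for v w
    using gen_inverse_le_shift[OF sample_cdf_shift[OF that] sample_cdf_gen_inverse_set[OF assms(1-3)]] .
  have "\<forall>i\<in>{1..n}. \<bar>w i - v i\<bar> \<le> e" using assms(4) by (simp add: abs_minus_commute)
  then show ?thesis using le[OF assms(4)] le[of w v] by linarith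
qed

lemma tendsto_emp_quantile:
  assumes "1 \<le> n" "0 < a" "a \<le> 1" "\<forall>i\<in>{1..n}. ((\<lambda>s. Xs i s \<omega>) \<longlongrightarrow> l i) F"
  shows "((\<lambda>s. emp_quantile Xs n a s \<omega>) \<longlongrightarrow> gen_inverse (sample_cdf n l) a) F"
  unfolding emp_quantile_eq_gen_inverse
proof (rule tendstoI)
  fix e :: real assume "0 < e"
  have "\<forall>i\<in>{1..n}. eventually (\<lambda>s. dist (Xs i s \<omega>) (l i) < e/2) F"
  proof
    fix i assume "i \<in> {1..n}"
    then have "((\<lambda>s. Xs i s \<omega>) \<longlongrightarrow> l i) F" using assms(4) by blast
    then show "eventually (\<lambda>s. dist (Xs i s \<omega>) (l i) < e/2) F"
      by (rule tendstoD) (use \<open>0 < e\<close> in simp)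
  qed
  then have "eventually (\<lambda>s. \<forall>i\<in>{1..n}. dist (Xs i s \<omega>) (l i) < e/2) F"
    by (simp add: eventually_ball_finite)
  then show "eventually (\<lambda>s. dist (gen_inverse (sample_cdf n (\<lambda>i. Xs i s \<omega>)) a)
      (gen_inverse (sample_cdf n l) a) < e) F"
  proof (rule eventually_mono)
    fix s assume "\<forall>i\<in>{1..n}. dist (Xs i s \<omega>) (l i) < e/2"
    then have "\<forall>i\<in>{1..n}. \<bar>Xs i s \<omega> - l i\<bar> \<le> e/2" by (auto simp: dist_real_def)
    from abs_gen_inverse_sample_cdf_diff_le[OF assms(1-3) this] \<open>0 < e\<close>
    show "dist (gen_inverse (sample_cdf n (\<lambda>i. Xs i s \<omega>)) a) (gen_inverse (sample_cdf n l) a) < e"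
      by (simp add: dist_real_def)
  qed
qed

lemma continuous_emp_quantile:
  assumes "1 \<le> n" "0 < a" "a \<le> 1" "\<forall>i\<in>{1..n}. continuous F (\<lambda>s. Xs i s \<omega>)"
  shows "continuous F (\<lambda>s. emp_quantile Xs n a s \<omega>)"
  using tendsto_emp_quantile[OF assms(1-3), of Xs \<omega> "\<lambda>i. Xs i (netlimit F) \<omega>" F] assms(4)
  unfolding continuous_def emp_quantile_eq_gen_inverse[of Xs n a "netlimit F" \<omega>] by simp

lemma ex_tendsto_emp_quantile:
  assumes "1 \<le> n" "0 < a" "a \<le> 1" "\<forall>i\<in>{1..n}. \<exists>l. ((\<lambda>s. Xs i s \<omega>) \<longlongrightarrow> l) F"
  shows "\<exists>l. ((\<lambda>s. emp_quantile Xs n a s \<omega>) \<longlongrightarrow> l) F"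
proof -
  obtain l where "\<forall>i\<in>{1..n}. ((\<lambda>s. Xs i s \<omega>) \<longlongrightarrow> l i) F"
    using bchoice[OF assms(4)] ..
  from tendsto_emp_quantile[where Xs=Xs and \<omega>=\<omega>, OF assms(1-3) this] show ?thesis ..
qed

lemma continuous_at_right_emp_quantile:
  assumes "1 \<le> n" "0 < a" "a \<le> 1" "0 \<le> t" "\<forall>i\<in>{1..n}. cadlag (\<lambda>s. Xs i s \<omega>)"
  shows "continuous (at_right t) (\<lambda>s. emp_quantile Xs n a s \<omega>)"
  using assms(5,4) unfolding cadlag_def by (intro continuous_emp_quantile[OF assms(1-3)]) simp

lemma left_limit_emp_quantile:
  assumes "1 \<le> n" "0 < a" "a \<le> 1" "0 < t" "\<forall>i\<in>{1..n}. cadlag (\<lambda>s. Xs i s \<omega>)"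
  shows "\<exists>l. ((\<lambda>s. emp_quantile Xs n a s \<omega>) \<longlongrightarrow> l) (at_left t)"
  using assms(5,4) unfolding cadlag_def by (intro ex_tendsto_emp_quantile[OF assms(1-3)]) simp

lemma continuous_on_emp_quantile:
  assumes "1 \<le> n" "0 < a" "a \<le> 1" "\<forall>i\<in>{1..n}. continuous_on S (\<lambda>s. Xs i s \<omega>)"
  shows "continuous_on S (\<lambda>s. emp_quantile Xs n a s \<omega>)"
  using assms(4) unfolding continuous_on_eq_continuous_within
  by (intro ballI continuous_emp_quantile[OF assms(1-3)]) simp

lemma emp_quantile_ceiling:
  assumes "1 \<le> n" "\<lceil>real n * a\<rceil> = \<lceil>real n * b\<rceil>"
  shows "emp_quantile Xs n a t \<omega> = emp_quantile Xs n b t \<omega>"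
proof -
  have iff: "a \<le> real c / real n \<longleftrightarrow> \<lceil>real n * a\<rceil> \<le> int c" for a :: real and c :: nat
    using assms(1) by (simp add: le_divide_eq ceiling_le_iff mult.commute)
  show ?thesis
    unfolding emp_quantile_eq_gen_inverse gen_inverse_def sample_cdf_def iff assms(2) ..
qed

lemma eventually_ceiling_eq_at_left:
  fixes a c :: real
  assumes "0 < c"
  shows "eventually (\<lambda>b. \<lceil>c * b\<rceil> = \<lceil>c * a\<rceil>) (at_left a)"
  unfolding eventually_at_left_field
proof (intro exI[of _ "(of_int \<lceil>c * a\<rceil> - 1) / c"] conjI allI impI)
  show "(of_int \<lceil>c * a\<rceil> - 1) / c < a"
    using assms ceiling_correct[of "c * a"] by (simp add: divide_less_eq mult.commute)
  fix b assume "(of_int \<lceil>c * a\<rceil> - 1) / c < b" "b < a"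
  then have "of_int \<lceil>c * a\<rceil> - 1 < c * b" "c * b \<le> c * a"
    using assms by (simp_all add: divide_less_eq mult.commute)
  then show "\<lceil>c * b\<rceil> = \<lceil>c * a\<rceil>"
    unfolding ceiling_eq_iff using le_of_int_ceiling[of "c * a"] by linarith
qed

lemma eventually_ceiling_eq_at_right:
  fixes a c :: real
  assumes "0 < c"
  shows "eventually (\<lambda>b. \<lceil>c * b\<rceil> = \<lfloor>c * a\<rfloor> + 1) (at_right a)"
  unfolding eventually_at_right_field
proof (intro exI[of _ "(of_int \<lfloor>c * a\<rfloor> + 1) / c"] conjI allI impI)
  show "a < (of_int \<lfloor>c * a\<rfloor> + 1) / c"
    using assms floor_correct[of "c * a"] by (simp add: less_divide_eq mult.commute)
  fix b assume "a < b" "b < (of_int \<lfloor>c * a\<rfloor> + 1) / c"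
  then have "c * a < c * b" "c * b < of_int \<lfloor>c * a\<rfloor> + 1"
    using assms by (simp_all add: less_divide_eq mult.commute)
  then show "\<lceil>c * b\<rceil> = \<lfloor>c * a\<rfloor> + 1"
    unfolding ceiling_eq_iff using of_int_floor_le[of "c * a"] by simp linarith
qed

lemma continuous_at_left_emp_quantile_level:
  assumes "1 \<le> n"
  shows "continuous (at_left a) (\<lambda>a. emp_quantile Xs n a t \<omega>)"
  unfolding continuous_within
  using eventually_ceiling_eq_at_left[of "real n" a] assms
  by (intro tendsto_eventually) (auto elim!: eventually_mono intro: emp_quantile_ceiling)

lemma right_limit_emp_quantile_level:
  assumes "1 \<le> n"
  shows "\<exists>l. ((\<lambda>a. emp_quantile Xs n a t \<omega>) \<longlongrightarrow> l) (at_right a)"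
proof -
  define b where "b = (of_int (\<lfloor>real n * a\<rfloor> + 1) :: real) / real n"
  have "\<lceil>real n * b\<rceil> = \<lfloor>real n * a\<rfloor> + 1" using assms by (simp add: b_def)
  then have "eventually (\<lambda>a. emp_quantile Xs n a t \<omega> = emp_quantile Xs n b t \<omega>) (at_right a)"
    using eventually_ceiling_eq_at_right[of "real n" a] assms
    by (auto elim!: eventually_mono intro: emp_quantile_ceiling)
  then show ?thesis by (blast intro: tendsto_eventually)
qed

lemma Rats_approx_same_ceiling:
  assumes "0 < n" "lo < hi" "a0 \<in> {lo..hi}" "0 < d"
  shows "\<exists>a\<in>{lo..hi} \<inter> \<rat>. \<bar>a - a0\<bar> < d \<and> \<lceil>real n * a\<rceil> = \<lceil>real n * a0\<rceil>"
proof (cases "a0 \<in> \<rat>")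
  case True
  then show ?thesis using assms by (intro bexI[of _ a0]) auto
next
  case False
  have "real n * a0 \<notin> \<int>"
  proof
    assume "real n * a0 \<in> \<int>"
    then obtain z where "real n * a0 = of_int z" by (auto elim!: Ints_cases)
    then have "a0 = of_int z / real n" using assms(1) by (simp add: field_simps)
    then show False using False by simp
  qed
  then have "eventually (\<lambda>b. \<lceil>real n * b\<rceil> = \<lceil>real n * a0\<rceil>) (at a0)"
    by (intro eventually_ceiling_eq tendsto_intros)
  then obtain e where "0 < e" and e: "\<And>b. b \<noteq> a0 \<Longrightarrow> dist b a0 < e \<Longrightarrow> \<lceil>real n * b\<rceil> = \<lceil>real n * a0\<rceil>"
    unfolding eventually_at by blast
  define r where "r = min d e"
  have "max lo (a0 - r) < min hi (a0 + r)"
    using assms \<open>0 < e\<close> by (auto simp: r_def)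
  then obtain a where a: "a \<in> \<rat>" "max lo (a0 - r) < a" "a < min hi (a0 + r)"
    using Rats_dense_in_real by blast
  then have "a \<noteq> a0" "\<bar>a - a0\<bar> < r" using False by auto
  then show ?thesis
    using a e[of a] by (intro bexI[of _ a]) (auto simp: r_def dist_real_def)
qed

section \<open>Suprema over a rational grid\<close>

lemma SUP_eq_SUP_of_approx:
  fixes f :: "'a \<Rightarrow> ereal"
  assumes "R \<subseteq> S" and approx: "\<And>p e. p \<in> S \<Longrightarrow> 0 < e \<Longrightarrow> \<exists>p'\<in>R. f p \<le> f p' + ereal e"
  shows "(SUP p\<in>S. f p) = (SUP p\<in>R. f p)"
proof (rule antisym)
  show "(SUP p\<in>S. f p) \<le> (SUP p\<in>R. f p)"
  proof (rule SUP_least)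
    fix p assume "p \<in> S"
    show "f p \<le> (SUP p\<in>R. f p)"
    proof (rule ereal_le_epsilon2)
      fix e :: real assume "0 < e"
      then obtain p' where "p' \<in> R" "f p \<le> f p' + ereal e" using approx \<open>p \<in> S\<close> by blast
      then show "f p \<le> (SUP p\<in>R. f p) + ereal e"
        by (meson SUP_upper add_right_mono order_trans)
    qed
  qed
  show "(SUP p\<in>R. f p) \<le> (SUP p\<in>S. f p)" using assms(1) by (rule SUP_subset_mono) simp
qed

lemma Rats_grid_approx:
  fixes g :: "real \<Rightarrow> real"
  assumes "t \<in> {0..T}" "t < T \<Longrightarrow> continuous (at_right t) g" "0 < e"
  shows "\<exists>t'\<in>({0..T} \<inter> \<rat>) \<union> {T}. \<bar>g t\<bar> \<le> \<bar>g t'\<bar> + e"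
proof (cases "t = T")
  case True
  then show ?thesis using assms(3) by auto
next
  case False
  then have "t < T" using assms(1) by simp
  have "eventually (\<lambda>s. dist (g s) (g t) < e) (at_right t)"
    using assms(2)[OF \<open>t < T\<close>] assms(3) unfolding continuous_within by (rule tendstoD)
  then obtain b where "t < b" and b: "\<And>s. t < s \<Longrightarrow> s < b \<Longrightarrow> dist (g s) (g t) < e"
    unfolding eventually_at_right_field by blast
  obtain r where "r \<in> \<rat>" "t < r" "r < min b T"
    using Rats_dense_in_real[of t "min b T"] \<open>t < b\<close> \<open>t < T\<close> by auto
  then show ?thesis
    using assms(1) b[of r] by (intro bexI[of _ r]) (auto simp: dist_real_def)
qed

lemma Rats_level_approx:
  fixes q :: "real \<Rightarrow> real"
  assumes "0 < H" "0 < n" "lo < hi" "a \<in> {lo..hi}" "isCont q a" "0 < e"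
  shows "\<exists>a'\<in>{lo..hi} \<inter> \<rat>. \<lceil>real n * a'\<rceil> = \<lceil>real n * a\<rceil>
           \<and> (\<forall>t\<in>{0..T}. \<bar>t powr H * q a' - t powr H * q a\<bar> \<le> e)"
proof -
  define K where "K = T powr H + 1"
  have "0 < K" by (simp add: K_def add_nonneg_pos)
  obtain d where "0 < d" and d: "\<And>b. dist b a < d \<Longrightarrow> dist (q b) (q a) < e / K"
    using assms(5,6) \<open>0 < K\<close> unfolding continuous_at_eps_delta by (metis divide_pos_pos)
  obtain a' where a': "a' \<in> {lo..hi} \<inter> \<rat>" "\<bar>a' - a\<bar> < d" "\<lceil>real n * a'\<rceil> = \<lceil>real n * a\<rceil>"
    using Rats_approx_same_ceiling[OF assms(2-4) \<open>0 < d\<close>] by blast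
  have "\<bar>t powr H * q a' - t powr H * q a\<bar> \<le> e" if "t \<in> {0..T}" for t
  proof -
    have "\<bar>t powr H * q a' - t powr H * q a\<bar> = t powr H * \<bar>q a' - q a\<bar>"
      by (simp add: abs_mult flip: right_diff_distrib)
    also have "\<dots> \<le> K * (e / K)"
    proof (rule mult_mono)
      show "t powr H \<le> K" using powr_mono2[of H t T] \<open>0 < H\<close> that by (simp add: K_def)
      show "\<bar>q a' - q a\<bar> \<le> e / K" using d[of a'] a'(2) by (simp add: dist_real_def)
    qed (use \<open>0 < K\<close> in auto)
    finally show ?thesis using \<open>0 < K\<close> by simp
  qed
  then show ?thesis using a' by blast
qed

lemma SUP_deviation_eq_SUP_Rats:
  fixes Q tau :: "real \<Rightarrow> real \<Rightarrow> real" and q :: "real \<Rightarrow> real"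
  assumes "0 < T" "0 < H" "0 < n" "lo < hi"
    and Q_ceiling: "\<And>a b t. \<lceil>real n * a\<rceil> = \<lceil>real n * b\<rceil> \<Longrightarrow> Q a t = Q b t"
    and Q_right: "\<And>a t. a \<in> {lo..hi} \<Longrightarrow> t \<in> {0..<T} \<Longrightarrow> continuous (at_right t) (Q a)"
    and q_cont: "\<And>a. a \<in> {lo..hi} \<Longrightarrow> isCont q a"
    and tau: "\<And>a t. a \<in> {lo..hi} \<Longrightarrow> 0 \<le> t \<Longrightarrow> tau a t = t powr H * q a"
  shows "(SUP (t, a)\<in>{0..T} \<times> {lo..hi}. ereal \<bar>Q a t - tau a t\<bar>)
       = (SUP (t, a)\<in>(({0..T} \<inter> \<rat>) \<union> {T}) \<times> ({lo..hi} \<inter> \<rat>). ereal \<bar>Q a t - tau a t\<bar>)"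
proof (rule SUP_eq_SUP_of_approx)
  show "(({0..T} \<inter> \<rat>) \<union> {T}) \<times> ({lo..hi} \<inter> \<rat>) \<subseteq> {0..T} \<times> {lo..hi}"
    using \<open>0 < T\<close> by auto
  fix p and e :: real assume "p \<in> {0..T} \<times> {lo..hi}" "0 < e"
  then obtain t a where p: "p = (t, a)" and t: "t \<in> {0..T}" and a: "a \<in> {lo..hi}" by auto
  obtain a' where a': "a' \<in> {lo..hi} \<inter> \<rat>" "\<lceil>real n * a'\<rceil> = \<lceil>real n * a\<rceil>"
    and a'_close: "\<bar>t powr H * q a' - t powr H * q a\<bar> \<le> e / 2"
    using Rats_level_approx[OF \<open>0 < H\<close> \<open>0 < n\<close> \<open>lo < hi\<close> a q_cont[OF a], of "e / 2" T] \<open>0 < e\<close> t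
    by auto
  define g where "g s = Q a' s - s powr H * q a'" for s
  have "tau a t = t powr H * q a" using tau a t by simp
  then have close: "\<bar>Q a t - tau a t\<bar> \<le> \<bar>g t\<bar> + e / 2"
    using a'_close Q_ceiling[OF a'(2), of t] unfolding g_def by (smt (verit))
  have g_right: "continuous (at_right t) g" if "t < T"
  proof -
    have "eventually (\<lambda>s. 0 \<le> s) (at_right t)"
      using t eventually_at_right_less[of t] by (auto elim: eventually_mono)
    then have "continuous (at_right t) (\<lambda>s. s powr H)"
      unfolding continuous_within using \<open>0 < H\<close>
      by (intro tendsto_powr' tendsto_ident_at tendsto_const) auto
    moreover have "continuous (at_right t) (Q a')" using Q_right a'(1) t that by auto
    ultimately show ?thesis
      unfolding g_def by (intro continuous_diff continuous_mult continuous_const)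
  qed
  obtain t' where t': "t' \<in> ({0..T} \<inter> \<rat>) \<union> {T}" "\<bar>g t\<bar> \<le> \<bar>g t'\<bar> + e / 2"
    using Rats_grid_approx[OF t g_right half_gt_zero[OF \<open>0 < e\<close>]] ..
  then have "g t' = Q a' t' - tau a' t'"
    using tau[of a' t'] a'(1) \<open>0 < T\<close> unfolding g_def by auto
  with close show "\<exists>p'\<in>(({0..T} \<inter> \<rat>) \<union> {T}) \<times> ({lo..hi} \<inter> \<rat>).
      (case p of (t, a) \<Rightarrow> ereal \<bar>Q a t - tau a t\<bar>)
    \<le> (case p' of (t, a) \<Rightarrow> ereal \<bar>Q a t - tau a t\<bar>) + ereal e"
    using t' a'(1) p by (intro bexI[of _ "(t', a')"]) auto
qed

lemma SUP_emp_quantile_deviation_eq_SUP_Rats: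
  assumes "prob_space N" "0 < H" "\<forall>t\<ge>0. X t \<in> borel_measurable N" "self_similar N H X"
    and "distributed N lborel (X 1) f" "\<And>x. 0 < f x"
    and "0 < T" "1 \<le> n" "0 < lo" "lo < hi" "hi < 1" "\<forall>i\<in>{1..n}. cadlag (\<lambda>s. Xs i s \<omega>)"
  shows "(SUP (t, a)\<in>{0..T} \<times> {lo..hi}. ereal \<bar>emp_quantile Xs n a t \<omega> - quantile N X a t\<bar>)
       = (SUP (t, a)\<in>(({0..T} \<inter> \<rat>) \<union> {T}) \<times> ({lo..hi} \<inter> \<rat>).
            ereal \<bar>emp_quantile Xs n a t \<omega> - quantile N X a t\<bar>)"
proof (rule SUP_deviation_eq_SUP_Rats[where n=n and q="\<lambda>a. quantile N X a 1"])
  fix a t assume "a \<in> {lo..hi}"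
  then have "0 < a" "a < 1" using assms(9,11) by auto
  show "t \<in> {0..<T} \<Longrightarrow> continuous (at_right t) (\<lambda>t. emp_quantile Xs n a t \<omega>)"
    using continuous_at_right_emp_quantile[where Xs=Xs and \<omega>=\<omega>, OF assms(8) \<open>0 < a\<close>]
      assms(12) \<open>a < 1\<close> by simp
  show "isCont (\<lambda>a. quantile N X a 1) a"
    using isCont_quantile[where X=X and t=1, OF assms(1,5,6) \<open>0 < a\<close> \<open>a < 1\<close>] .
  show "0 \<le> t \<Longrightarrow> quantile N X a t = t powr H * quantile N X a 1"
    using quantile_self_similar[OF assms(1-4) _ \<open>0 < a\<close> \<open>a < 1\<close>] .
qed (use assms emp_quantile_ceiling[OF assms(8)] in auto)

theorem lemma3:
  fixes N :: "'a measure" and M :: "'b measure"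
    and X :: "real \<Rightarrow> 'a \<Rightarrow> real" and Xs :: "nat \<Rightarrow> real \<Rightarrow> 'b \<Rightarrow> real"
    and H T \<alpha>s :: real and f :: "real \<Rightarrow> ennreal" and A :: "real set"
  assumes N_prob: "prob_space N"
    and M_prob: "prob_space M"
    and M_complete: "complete_measure M"
    and H_pos: "H > 0"
    and X_meas: "\<forall>t\<ge>0. X t \<in> borel_measurable N"
    and X_ss: "self_similar N H X"
    and X_cadlag: "\<forall>\<omega>\<in>space N. cadlag (\<lambda>t. X t \<omega>)"
    and T_pos: "0 < T"
    and X1_density: "distributed N lborel (X 1) f"
    and f_pos: "\<forall>x. f x > 0"
    and Xs_meas: "\<forall>j\<ge>1. \<forall>t\<ge>0. Xs j t \<in> borel_measurable M"
    and Xs_cadlag: "\<forall>j\<ge>1. \<forall>\<omega>\<in>space M. cadlag (\<lambda>t. Xs j t \<omega>)"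
    and Xs_law: "\<forall>j\<ge>1. path_law M (Xs j) = path_law N X"
    and Xs_indep: "prob_space.indep_vars M (\<lambda>_. PiM {0..} (\<lambda>_. borel))
                     (\<lambda>j \<omega>. \<lambda>t\<in>{0..}. Xs j t \<omega>) {1..}"
    and \<alpha>s_gt: "1/2 < \<alpha>s" and \<alpha>s_lt: "\<alpha>s < 1"
    and A_def: "A = {1 - \<alpha>s..\<alpha>s}"
  shows "\<forall>n\<ge>1.
     (AE \<omega> in M. \<forall>\<alpha>\<in>{0<..<1}. \<forall>t\<in>{0..<T}.
         continuous (at_right t) (\<lambda>s. emp_quantile Xs n \<alpha> s \<omega>))
   \<and> (AE \<omega> in M.
         (SUP (t, \<alpha>)\<in>{0..T} \<times> A. ereal \<bar>emp_quantile Xs n \<alpha> t \<omega> - quantile N X \<alpha> t\<bar>)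
       = (SUP (t, \<alpha>)\<in>(({0..T} \<inter> \<rat>) \<union> {T}) \<times> (A \<inter> \<rat>).
            ereal \<bar>emp_quantile Xs n \<alpha> t \<omega> - quantile N X \<alpha> t\<bar>))
   \<and> (AE \<omega> in M. \<forall>\<alpha>\<in>{0<..<1}. \<forall>t\<in>{0<..T}.
         \<exists>l. ((\<lambda>s. emp_quantile Xs n \<alpha> s \<omega>) \<longlongrightarrow> l) (at_left t))
   \<and> ((\<forall>\<omega>\<in>space N. continuous_on {0..} (\<lambda>t. X t \<omega>))
       \<and> (\<forall>j\<ge>1. \<forall>\<omega>\<in>space M. continuous_on {0..} (\<lambda>t. Xs j t \<omega>))
       \<longrightarrow> (AE \<omega> in M. \<forall>\<alpha>\<in>{0<..<1}.
              continuous_on {0..T} (\<lambda>t. emp_quantile Xs n \<alpha> t \<omega>)))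
   \<and> (\<forall>t\<in>{0..T}. AE \<omega> in M. \<forall>\<alpha>\<in>{0<..<1}.
         continuous (at_left \<alpha>) (\<lambda>a. emp_quantile Xs n a t \<omega>)
       \<and> (\<exists>l. ((\<lambda>a. emp_quantile Xs n a t \<omega>) \<longlongrightarrow> l) (at_right \<alpha>)))"
proof (intro allI impI conjI ballI)
  fix n :: nat assume n: "1 \<le> n"
  have cadlag: "\<forall>i\<in>{1..n}. cadlag (\<lambda>s. Xs i s \<omega>)" if "\<omega> \<in> space M" for \<omega>
    using Xs_cadlag that by simp
  show "AE \<omega> in M. \<forall>\<alpha>\<in>{0<..<1}. \<forall>t\<in>{0..<T}.
         continuous (at_right t) (\<lambda>s. emp_quantile Xs n \<alpha> s \<omega>)"
    by (intro AE_I2 ballI continuous_at_right_emp_quantile[OF n _ _ _ cadlag]) auto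
  show "AE \<omega> in M. \<forall>\<alpha>\<in>{0<..<1}. \<forall>t\<in>{0<..T}.
         \<exists>l. ((\<lambda>s. emp_quantile Xs n \<alpha> s \<omega>) \<longlongrightarrow> l) (at_left t)"
    by (intro AE_I2 ballI left_limit_emp_quantile[OF n _ _ _ cadlag]) auto
  show "AE \<omega> in M. \<forall>\<alpha>\<in>{0<..<1}. continuous_on {0..T} (\<lambda>t. emp_quantile Xs n \<alpha> t \<omega>)"
    if "(\<forall>\<omega>\<in>space N. continuous_on {0..} (\<lambda>t. X t \<omega>))
       \<and> (\<forall>j\<ge>1. \<forall>\<omega>\<in>space M. continuous_on {0..} (\<lambda>t. Xs j t \<omega>))"
    using that continuous_on_subset[of "{0..}" _ "{0..T}"]
    by (intro AE_I2 ballI continuous_on_emp_quantile[OF n]) auto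
  show "AE \<omega> in M. \<forall>\<alpha>\<in>{0<..<1}. continuous (at_left \<alpha>) (\<lambda>a. emp_quantile Xs n a t \<omega>)
       \<and> (\<exists>l. ((\<lambda>a. emp_quantile Xs n a t \<omega>) \<longlongrightarrow> l) (at_right \<alpha>))" for t
    by (intro AE_I2 ballI conjI continuous_at_left_emp_quantile_level[OF n]
        right_limit_emp_quantile_level[OF n])
  show "AE \<omega> in M.
         (SUP (t, \<alpha>)\<in>{0..T} \<times> A. ereal \<bar>emp_quantile Xs n \<alpha> t \<omega> - quantile N X \<alpha> t\<bar>)
       = (SUP (t, \<alpha>)\<in>(({0..T} \<inter> \<rat>) \<union> {T}) \<times> (A \<inter> \<rat>).
            ereal \<bar>emp_quantile Xs n \<alpha> t \<omega> - quantile N X \<alpha> t\<bar>)"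
    unfolding A_def using \<alpha>s_gt \<alpha>s_lt
    by (intro AE_I2 SUP_emp_quantile_deviation_eq_SUP_Rats[OF N_prob H_pos X_meas X_ss X1_density
        f_pos[rule_format] T_pos n _ _ _ cadlag]) auto
qed

end
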